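(* Let $n,m\ge 5$ be integers with $m\equiv 0\pmod 4$ and $n\equiv 1\pmod 4$. Then $\gamma_p(C_n\times C_m)\le\frac{(n+1)m}{4}$.
   Context: All graphs are finite, simple and undirected. $C_n$ denotes the cycle of order $n$ and $G\times H$ the Cartesian product of graphs. For a graph $G$ without isolated vertices, a set $D\subseteq V(G)$ is a paired dominating set if every vertex outside $D$ has a neighbour in $D$ and the induced subgraph $G[D]$ has a perfect matching; $\gamma_p(G)$ is the minimum size of a paired dominating set. *)

theory Defs
  imports Complex_Main
begin

(* A finite simple graph is given by a vertex set V and a symmetric,
   irreflexive adjacency relation E (only its restriction to V matters). *)

definition dominating :: "'a set \<Rightarrow> ('a \<Rightarrow> 'a \<Rightarrow> bool) \<Rightarrow> 'a set \<Rightarrow> bool" where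
  "dominating V E D \<longleftrightarrow> D \<subseteq> V \<and> (\<forall>v\<in>V - D. \<exists>u\<in>D. E v u)"

definition perfect_matching_on :: "('a \<Rightarrow> 'a \<Rightarrow> bool) \<Rightarrow> 'a set \<Rightarrow> 'a set set \<Rightarrow> bool" where
  "perfect_matching_on E D M \<longleftrightarrow>
     (\<forall>e\<in>M. \<exists>u v. e = {u, v} \<and> u \<in> D \<and> v \<in> D \<and> u \<noteq> v \<and> E u v) \<and>
     (\<forall>e\<in>M. \<forall>f\<in>M. e \<noteq> f \<longrightarrow> e \<inter> f = {}) \<and>
     \<Union>M = D"

definition paired_dominating :: "'a set \<Rightarrow> ('a \<Rightarrow> 'a \<Rightarrow> bool) \<Rightarrow> 'a set \<Rightarrow> bool" where
  "paired_dominating V E D \<longleftrightarrow> dominating V E D \<and> (\<exists>M. perfect_matching_on E D M)"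

definition gamma_p :: "'a set \<Rightarrow> ('a \<Rightarrow> 'a \<Rightarrow> bool) \<Rightarrow> nat" where
  "gamma_p V E = (LEAST k. \<exists>D. paired_dominating V E D \<and> card D = k)"

definition cycle_adj :: "nat \<Rightarrow> nat \<Rightarrow> nat \<Rightarrow> bool" where
  "cycle_adj n i j \<longleftrightarrow> i \<noteq> j \<and> (j = (i + 1) mod n \<or> i = (j + 1) mod n)"

definition cart_adj :: "('a \<Rightarrow> 'a \<Rightarrow> bool) \<Rightarrow> ('b \<Rightarrow> 'b \<Rightarrow> bool) \<Rightarrow> 'a \<times> 'b \<Rightarrow> 'a \<times> 'b \<Rightarrow> bool" where
  "cart_adj E1 E2 x y \<longleftrightarrow>
     (fst x = fst y \<and> E2 (snd x) (snd y)) \<or> (snd x = snd y \<and> E1 (fst x) (fst y))"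

definition torus_vertices :: "nat \<Rightarrow> nat \<Rightarrow> (nat \<times> nat) set" where
  "torus_vertices n m = {0..<n} \<times> {0..<m}"

definition torus_adj :: "nat \<Rightarrow> nat \<Rightarrow> nat \<times> nat \<Rightarrow> nat \<times> nat \<Rightarrow> bool" where
  "torus_adj n m = cart_adj (cycle_adj n) (cycle_adj m)"

end

theory Submission
  imports Defs
begin

text \<open>
  In every even row i of the n \<times> m torus take the horizontal dominoes in the column pairs
  {2c, 2c+1} with c \<equiv> i/2 (mod 2). Consecutive even rows use complementary column pairs, so a
  vertex in an odd row is dominated from the row above or below; a vertex of an even row outside
  the set lies next to a chosen domino in its own row. Oddness of n keeps the last row even, and
  4 | m makes the column pattern periodic around the torus. The dominoes form the perfect matching,
  and the set has (n+1)/2 \<cdot> m/2 = (n+1)m/4 vertices.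
\<close>

lemma gamma_p_le_card:
  assumes "paired_dominating V E D"
  shows "gamma_p V E \<le> card D"
  unfolding gamma_p_def by (rule Least_le) (use assms in blast)

lemma cycle_adj_commute: "cycle_adj n i j \<longleftrightarrow> cycle_adj n j i"
  unfolding cycle_adj_def by blast

lemma cycle_adj_Suc: "Suc i < n \<Longrightarrow> cycle_adj n i (Suc i)"
  unfolding cycle_adj_def by simp

lemma cycle_adj_succ_mod:
  assumes "1 < n"
  shows "cycle_adj n i ((i + 1) mod n)"
proof -
  have "(i + 1) mod n \<noteq> i"
  proof
    assume eq: "(i + 1) mod n = i"
    moreover have "(i + 1) mod n < n" using assms by simp
    ultimately have "i < n" by simp
    then consider "i + 1 < n" | "i + 1 = n" by linarith
    then show False using eq assms by cases auto
  qed
  then show ?thesis unfolding cycle_adj_def by simp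
qed

lemma cycle_adj_pred_mod:
  assumes "1 < n" and "i < n"
  shows "cycle_adj n i ((i + n - 1) mod n)"
proof -
  have "((i + n - 1) mod n + 1) mod n = i"
    using assms by (simp add: mod_Suc_eq)
  then show ?thesis
    using cycle_adj_succ_mod[OF assms(1), of "(i + n - 1) mod n"] cycle_adj_commute by metis
qed

lemma torus_adj_same_column: "torus_adj n m (i, j) (i', j) \<longleftrightarrow> cycle_adj n i i'"
  unfolding torus_adj_def cart_adj_def by (simp add: cycle_adj_def)

lemma torus_adj_same_row: "torus_adj n m (i, j) (i, j') \<longleftrightarrow> cycle_adj m j j'"
  unfolding torus_adj_def cart_adj_def by (simp add: cycle_adj_def)

lemma even_half_mod:
  assumes "4 dvd m"
  shows "even (x mod m div 2) \<longleftrightarrow> even (x div 2 :: nat)"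
proof -
  obtain k where m: "m = 4 * k" using assms by blast
  have "x div 2 = (x mod m + 2 * (2 * k * (x div m))) div 2"
    using div_mult_mod_eq[of x m] m by (simp add: ac_simps)
  also have "\<dots> = x mod m div 2 + 2 * k * (x div m)"
    by simp
  finally have "x div 2 = x mod m div 2 + 2 * k * (x div m)" .
  then show ?thesis by simp
qed

definition paired_pattern :: "nat \<Rightarrow> nat \<Rightarrow> (nat \<times> nat) set" where
  "paired_pattern n m = {(i, j). i < n \<and> j < m \<and> even i \<and> even (i div 2 + j div 2)}"

lemma paired_pattern_Suc:
  assumes "even m" and "(i, j) \<in> paired_pattern n m" and "even j"
  shows "(i, Suc j) \<in> paired_pattern n m"
proof -
  have "j < m" using assms(2) unfolding paired_pattern_def by simp
  moreover have "Suc j \<noteq> m" using assms(1,3) by auto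
  ultimately have "Suc j < m" by simp
  moreover have "Suc j div 2 = j div 2" using assms(3) by simp
  ultimately show ?thesis using assms(2) unfolding paired_pattern_def by simp
qed

definition row_domino :: "nat \<times> nat \<Rightarrow> (nat \<times> nat) set" where
  "row_domino x = {x, (fst x, Suc (snd x))}"

definition pattern_dominoes :: "nat \<Rightarrow> nat \<Rightarrow> (nat \<times> nat) set set" where
  "pattern_dominoes n m = row_domino ` {(i, j) \<in> paired_pattern n m. even j}"

lemma pattern_dominoesE:
  assumes e: "e \<in> pattern_dominoes n m"
  obtains i j where "e = {(i, j), (i, Suc j)}" "(i, j) \<in> paired_pattern n m" "even j"
  using e unfolding pattern_dominoes_def row_domino_def by auto

lemma pattern_domino_eq:
  assumes "e \<in> pattern_dominoes n m" and "(a, b) \<in> e"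
  shows "e = {(a, 2 * (b div 2)), (a, Suc (2 * (b div 2)))}"
proof -
  obtain i j where e: "e = {(i, j), (i, Suc j)}" "even j"
    using assms(1) by (rule pattern_dominoesE)
  with assms(2) have "a = i" "2 * (b div 2) = j" by auto
  with e show ?thesis by simp
qed

lemma pattern_dominoes_disjoint:
  assumes "e \<in> pattern_dominoes n m" and "f \<in> pattern_dominoes n m" and "e \<noteq> f"
  shows "e \<inter> f = {}"
proof (rule ccontr)
  assume "e \<inter> f \<noteq> {}"
  then obtain a b where "(a, b) \<in> e" "(a, b) \<in> f" by auto
  then have "e = f" using pattern_domino_eq assms(1,2) by metis
  with assms(3) show False ..
qed

lemma Union_pattern_dominoes:
  assumes "even m"
  shows "\<Union>(pattern_dominoes n m) = paired_pattern n m"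
proof
  show "\<Union>(pattern_dominoes n m) \<subseteq> paired_pattern n m"
  proof
    fix x assume "x \<in> \<Union>(pattern_dominoes n m)"
    then obtain e where "e \<in> pattern_dominoes n m" "x \<in> e" by blast
    then obtain i j where "x \<in> {(i, j), (i, Suc j)}" "(i, j) \<in> paired_pattern n m" "even j"
      by (metis pattern_dominoesE)
    then show "x \<in> paired_pattern n m" using paired_pattern_Suc[OF assms] by auto
  qed
  show "paired_pattern n m \<subseteq> \<Union>(pattern_dominoes n m)"
  proof
    fix x assume x: "x \<in> paired_pattern n m"
    obtain i j where ij: "x = (i, j)" by fastforce
    define j' where "j' = 2 * (j div 2)"
    have j': "even j'" "j = j' \<or> j = Suc j'"
      unfolding j'_def by presburger+
    then have "(i, j') \<in> paired_pattern n m" using x ij unfolding paired_pattern_def by auto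
    with j' have "row_domino (i, j') \<in> pattern_dominoes n m"
      unfolding pattern_dominoes_def by blast
    moreover have "x \<in> row_domino (i, j')" using ij j' by (auto simp: row_domino_def)
    ultimately show "x \<in> \<Union>(pattern_dominoes n m)" by blast
  qed
qed

lemma pattern_dominoes_perfect_matching:
  assumes "even m"
  shows "perfect_matching_on (torus_adj n m) (paired_pattern n m) (pattern_dominoes n m)"
  unfolding perfect_matching_on_def
proof (intro conjI ballI impI)
  fix e assume "e \<in> pattern_dominoes n m"
  then obtain i j where e: "e = {(i, j), (i, Suc j)}" and ij: "(i, j) \<in> paired_pattern n m" "even j"
    by (rule pattern_dominoesE)
  have "Suc j < m"
    using paired_pattern_Suc[OF assms ij] unfolding paired_pattern_def by simp
  then have "torus_adj n m (i, j) (i, Suc j)"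
    by (simp add: torus_adj_same_row cycle_adj_Suc)
  with e ij paired_pattern_Suc[OF assms ij]
  show "\<exists>u v. e = {u, v} \<and> u \<in> paired_pattern n m \<and> v \<in> paired_pattern n m \<and> u \<noteq> v \<and>
      torus_adj n m u v"
    by (intro exI[of _ "(i, j)"] exI[of _ "(i, Suc j)"]) simp
next
  fix e f assume "e \<in> pattern_dominoes n m" "f \<in> pattern_dominoes n m" "e \<noteq> f"
  then show "e \<inter> f = {}" by (rule pattern_dominoes_disjoint)
next
  show "\<Union>(pattern_dominoes n m) = paired_pattern n m"
    using assms by (rule Union_pattern_dominoes)
qed

lemma paired_pattern_dominates_even_row:
  assumes "4 dvd m" and "even i" and "i < n" and "j < m" and "odd (i div 2 + j div 2)"
  shows "\<exists>u\<in>paired_pattern n m. torus_adj n m (i, j) u"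
proof -
  obtain k where m: "m = 4 * k" and "0 < k" using assms(1,4) by (auto elim: dvdE)
  then have "1 < m" by simp
  obtain j' where j': "j' < m" "cycle_adj m j j'" "even (i div 2 + j' div 2)"
  proof (cases "even j")
    case True
    then have "even ((j + m - 1) div 2) \<longleftrightarrow> odd (j div 2)"
      using m \<open>0 < k\<close> by presburger
    then have par: "even (i div 2 + (j + m - 1) mod m div 2)"
      using assms(5) even_half_mod[OF assms(1)] by simp
    show ?thesis
      by (rule that[OF _ cycle_adj_pred_mod[OF \<open>1 < m\<close> assms(4)] par]) (simp add: m \<open>0 < k\<close>)
  next
    case False
    then have "even ((j + 1) div 2) \<longleftrightarrow> odd (j div 2)" by presburger
    then have par: "even (i div 2 + (j + 1) mod m div 2)"
      using assms(5) even_half_mod[OF assms(1)] by simp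
    show ?thesis
      by (rule that[OF _ cycle_adj_succ_mod[OF \<open>1 < m\<close>] par]) (simp add: m \<open>0 < k\<close>)
  qed
  then have "(i, j') \<in> paired_pattern n m"
    using assms(2,3) unfolding paired_pattern_def by simp
  moreover have "torus_adj n m (i, j) (i, j')"
    using j'(2) by (simp add: torus_adj_same_row)
  ultimately show ?thesis by blast
qed

lemma paired_pattern_dominates_odd_row:
  assumes "odd n" and "odd i" and "i < n" and "j < m"
  shows "\<exists>u\<in>paired_pattern n m. torus_adj n m (i, j) u"
proof -
  obtain a where i: "i = Suc (2 * a)" using assms(2) by (auto elim: oddE)
  have "Suc i < n" using assms(1,3) i by presburger
  consider "even (a + j div 2)" | "even (Suc a + j div 2)" by auto
  then show ?thesis
  proof cases
    case 1
    then have "(2 * a, j) \<in> paired_pattern n m"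
      using i assms(3,4) unfolding paired_pattern_def by simp
    moreover have "torus_adj n m (i, j) (2 * a, j)"
      using cycle_adj_Suc[of "2 * a" n] assms(3) i cycle_adj_commute
      by (simp add: torus_adj_same_column)
    ultimately show ?thesis by blast
  next
    case 2
    then have "(Suc i, j) \<in> paired_pattern n m"
      using i assms(4) \<open>Suc i < n\<close> unfolding paired_pattern_def by simp
    moreover have "torus_adj n m (i, j) (Suc i, j)"
      using cycle_adj_Suc[OF \<open>Suc i < n\<close>] by (simp add: torus_adj_same_column)
    ultimately show ?thesis by blast
  qed
qed

lemma paired_pattern_dominating:
  assumes "odd n" and "4 dvd m"
  shows "dominating (torus_vertices n m) (torus_adj n m) (paired_pattern n m)"
  unfolding dominating_def
proof (intro conjI ballI)
  show "paired_pattern n m \<subseteq> torus_vertices n m"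
    unfolding paired_pattern_def torus_vertices_def by auto
next
  fix v assume v: "v \<in> torus_vertices n m - paired_pattern n m"
  then obtain i j where vij: "v = (i, j)" and ij: "i < n" "j < m"
    unfolding torus_vertices_def by auto
  with v have "\<not> (even i \<and> even (i div 2 + j div 2))"
    unfolding paired_pattern_def by auto
  then show "\<exists>u\<in>paired_pattern n m. torus_adj n m v u"
    unfolding vij using paired_pattern_dominates_even_row[OF assms(2) _ ij]
      paired_pattern_dominates_odd_row[OF assms(1) _ ij] by blast
qed

lemma card_paired_pattern_le:
  assumes "4 dvd m"
  shows "card (paired_pattern n m) \<le> (n + 1) div 2 * (m div 2)"
proof -
  define A where "A = {..<(n + 1) div 2} \<times> {..<m div 4} \<times> {..<2::nat}"
  define f :: "nat \<times> nat \<times> nat \<Rightarrow> nat \<times> nat"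
    where "f = (\<lambda>(a, b, e). (2 * a, 4 * b + 2 * (a mod 2) + e))"
  have "paired_pattern n m \<subseteq> f ` A"
  proof
    fix x assume "x \<in> paired_pattern n m"
    then obtain i j where x: "x = (i, j)" and ij: "i < n" "j < m" "even i" "even (i div 2 + j div 2)"
      unfolding paired_pattern_def by auto
    have "(i div 2, j div 4, j mod 2) \<in> A"
      using ij assms unfolding A_def by (auto elim!: dvdE)
    moreover have "f (i div 2, j div 4, j mod 2) = (i, j)"
      using ij unfolding f_def by simp presburger
    ultimately show "x \<in> f ` A" unfolding x by (metis image_eqI)
  qed
  then have "card (paired_pattern n m) \<le> card (f ` A)"
    by (rule card_mono[rotated]) (simp add: A_def)
  also have "\<dots> \<le> card A"
    by (rule card_image_le) (simp add: A_def)
  also have "\<dots> = (n + 1) div 2 * (m div 2)"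
    using assms unfolding A_def by (auto simp: card_cartesian_product elim!: dvdE)
  finally show ?thesis .
qed

theorem theorem5p2:
  fixes n m :: nat
  assumes "n \<ge> 5" and "m \<ge> 5" and "m mod 4 = 0" and "n mod 4 = 1"
  shows "real (gamma_p (torus_vertices n m) (torus_adj n m)) \<le> real ((n + 1) * m) / 4"
proof -
  have "odd n" using assms(4) by presburger
  have "4 dvd m" "even m" using assms(3) by presburger+
  then have "paired_dominating (torus_vertices n m) (torus_adj n m) (paired_pattern n m)"
    unfolding paired_dominating_def
    using paired_pattern_dominating[OF \<open>odd n\<close>]
      pattern_dominoes_perfect_matching by blast
  then have "gamma_p (torus_vertices n m) (torus_adj n m) \<le> (n + 1) div 2 * (m div 2)"
    using gamma_p_le_card card_paired_pattern_le[OF \<open>4 dvd m\<close>] le_trans by blast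
  moreover have "real ((n + 1) div 2 * (m div 2)) = real ((n + 1) * m) / 4"
  proof -
    obtain a b where "n = 2 * a + 1" "m = 4 * b"
      using \<open>odd n\<close> \<open>4 dvd m\<close> by (auto elim!: oddE dvdE)
    then show ?thesis by simp
  qed
  ultimately show ?thesis by (metis of_nat_le_iff)
qed

end
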